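(* Let $Z,A\in\mathfrak m_0$ with $\mathrm{ad}_Z^2A=\nu_1A$ and $\mathrm{ad}_{JZ}^2A=\nu_2A$ (where $\nu_1,\nu_2\ge0$). Then $A$ is an eigenvector of $E_Z$, $E_{JZ}$, $S_Z$, $S_{JZ}$ with eigenvalues $\frac{\sinh\sqrt{\nu_1}}{\sqrt{\nu_1}}$, $\frac{\sinh\sqrt{\nu_2}}{\sqrt{\nu_2}}$, $\cosh\sqrt{\nu_1}$, $\cosh\sqrt{\nu_2}$ respectively, and $JA$ is an eigenvector of $E_Z$, $E_{JZ}$, $S_Z$, $S_{JZ}$ with eigenvalues $\frac{\sinh\sqrt{\nu_2}}{\sqrt{\nu_2}}$, $\frac{\sinh\sqrt{\nu_1}}{\sqrt{\nu_1}}$, $\cosh\sqrt{\nu_2}$, $\cosh\sqrt{\nu_1}$ respectively.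
   Context: Let $G$ be a simple complex algebraic group with commuting antiholomorphic involutions $\sigma,\theta$, $G_u=G^\theta$ maximal compact, $G_0=G^\sigma$, $K=G^{\sigma\theta}$, $K_0=K\cap G_0$. $\mathfrak g=\mathfrak k\oplus\mathfrak m$ is the $\pm1$-eigenspace decomposition of $\sigma\theta$, $\mathfrak m_0=\mathfrak m\cap\mathfrak g_0$. Assume $G_u/K_0$ is an irreducible Hermitian symmetric space of compact type; $\Upsilon$ is in the center of $\mathfrak k\cap\mathfrak g_0$ with $\mathrm{ad}_\Upsilon$ having eigenvalues $\pm i$ on $\mathfrak m$; $J=\mathrm{ad}_\Upsilon|_{\mathfrak m}$ (preserving $\mathfrak m_0$). For $Y\in\mathfrak m_0$: $E_Y=\sum_{n\ge0}\frac{\mathrm{ad}_Y^{2n}}{(2n+1)!}$, $S_Y=\sum_{n\ge0}\frac{\mathrm{ad}_Y^{2n}}{(2n)!}$, acting on $\mathfrak m_0$. The expression $\frac{\sinh\sqrt\nu}{\sqrt\nu}$ is interpreted as $1$ when $\nu=0$. For $Y\in\mathfrak m_0$, $\mathrm{ad}_Y^2$ is diagonalizable on $\mathfrak m_0$ with nonnegative real eigenvalues. *)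

theory Defs
  imports "HOL-Analysis.Analysis"
begin

text \<open>Abstract model of the real Lie algebra g0 = k0 (+) m0 of the setting:
  a finite-dimensional real Lie algebra with bracket br, a symmetric
  decomposition into subspaces K (= k0) and M (= m0), and an element Ups
  (= Upsilon) central in K with ad_Ups^2 = -1 on M (ad_Ups has eigenvalues +-i on m).\<close>

definition lie_bracket :: "('g::real_vector \<Rightarrow> 'g \<Rightarrow> 'g) \<Rightarrow> bool" where
  "lie_bracket br \<longleftrightarrow> bilinear br \<and> (\<forall>x. br x x = 0) \<and>
     (\<forall>x y z. br x (br y z) + br y (br z x) + br z (br x y) = 0)"

definition herm_sym_data ::
  "('g::real_vector \<Rightarrow> 'g \<Rightarrow> 'g) \<Rightarrow> 'g set \<Rightarrow> 'g set \<Rightarrow> 'g \<Rightarrow> bool" where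
  "herm_sym_data br K M Ups \<longleftrightarrow>
     lie_bracket br \<and> subspace K \<and> subspace M \<and> K \<inter> M = {0} \<and>
     (\<forall>x. \<exists>k\<in>K. \<exists>m\<in>M. x = k + m) \<and>
     (\<forall>x\<in>K. \<forall>y\<in>K. br x y \<in> K) \<and>
     (\<forall>x\<in>K. \<forall>y\<in>M. br x y \<in> M) \<and>
     (\<forall>x\<in>M. \<forall>y\<in>M. br x y \<in> K) \<and>
     Ups \<in> K \<and> (\<forall>x\<in>K. br Ups x = 0) \<and>
     (\<forall>x\<in>M. br Ups (br Ups x) = - x)"

definition Jop :: "('g \<Rightarrow> 'g \<Rightarrow> 'g) \<Rightarrow> 'g \<Rightarrow> 'g \<Rightarrow> 'g" where
  "Jop br Ups x = br Ups x"

definition E_op :: "('g::real_normed_vector \<Rightarrow> 'g \<Rightarrow> 'g) \<Rightarrow> 'g \<Rightarrow> 'g \<Rightarrow> 'g" where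
  "E_op br Y v = (\<Sum>n. ((br Y ^^ (2*n)) v) /\<^sub>R fact (2*n+1))"

definition S_op :: "('g::real_normed_vector \<Rightarrow> 'g \<Rightarrow> 'g) \<Rightarrow> 'g \<Rightarrow> 'g \<Rightarrow> 'g" where
  "S_op br Y v = (\<Sum>n. ((br Y ^^ (2*n)) v) /\<^sub>R fact (2*n))"

definition sinhc :: "real \<Rightarrow> real" where
  "sinhc \<nu> = (if \<nu> = 0 then 1 else sinh (sqrt \<nu>) / sqrt \<nu>)"

definition is_eigvec :: "('g::real_vector \<Rightarrow> 'g) \<Rightarrow> 'g \<Rightarrow> real \<Rightarrow> bool" where
  "is_eigvec T v c \<longleftrightarrow> v \<noteq> 0 \<and> T v = c *\<^sub>R v"

end

theory Submission
  imports Defs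
begin

text \<open>The operator J = ad \<Upsilon> is a derivation of the bracket that kills [m0, m0] \<subseteq> k0.
  Hence [JX, JY] = [X, Y] on m0 and J (ad_X^2 A) = ad_(JX)^2 (JA); taking X = Z and X = JZ
  (with J^2 = -1) makes JA an eigenvector of ad_(JZ)^2 for \<nu>1 and of ad_Z^2 for \<nu>2.
  On an eigenvector of ad_Y^2 with eigenvalue \<nu> the series E_Y and S_Y collapse to the scalar
  series of sinh \<surd>\<nu> / \<surd>\<nu> and cosh \<surd>\<nu>.\<close>

lemma real_sqrt_power_even:
  fixes x :: real
  assumes "x \<ge> 0"
  shows "sqrt x ^ (2 * n) = x ^ n"
  using assms by (metis power_mult real_sqrt_pow2)

lemma sums_cosh_sqrt:
  fixes \<nu> :: real
  assumes "\<nu> \<ge> 0"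
  shows "(\<lambda>n. \<nu> ^ n / fact (2 * n)) sums cosh (sqrt \<nu>)"
proof -
  have "(\<lambda>n. if even n then sqrt \<nu> ^ n /\<^sub>R fact n else 0) sums cosh (sqrt \<nu>)"
    by (rule cosh_converges)
  then have "(\<lambda>n. sqrt \<nu> ^ (2 * n) /\<^sub>R fact (2 * n)) sums cosh (sqrt \<nu>)"
    by (subst (asm) sums_mono_reindex[of "\<lambda>n. 2 * n", symmetric])
       (auto simp: strict_mono_def elim!: evenE)
  then show ?thesis
    using real_sqrt_power_even[OF assms] by (simp add: divide_inverse mult.commute)
qed

lemma sums_sinhc:
  fixes \<nu> :: real
  assumes "\<nu> \<ge> 0"
  shows "(\<lambda>n. \<nu> ^ n / fact (2 * n + 1)) sums sinhc \<nu>"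
proof (cases "\<nu> = 0")
  case True
  then have "(\<lambda>n. \<nu> ^ n / fact (2 * n + 1)) = (\<lambda>n. if n = 0 then 1 else 0)"
    by auto
  then show ?thesis
    using True sums_single[of 0 "\<lambda>_. 1::real"] by (simp add: sinhc_def)
next
  case False
  have "(\<lambda>n. if even n then 0 else sqrt \<nu> ^ n /\<^sub>R fact n) sums sinh (sqrt \<nu>)"
    by (rule sinh_converges)
  then have "(\<lambda>n. sqrt \<nu> ^ (2 * n + 1) /\<^sub>R fact (2 * n + 1)) sums sinh (sqrt \<nu>)"
    by (subst (asm) sums_mono_reindex[of "\<lambda>n. 2 * n + 1", symmetric])
       (auto simp: strict_mono_def elim!: oddE)
  then have "(\<lambda>n. sqrt \<nu> ^ (2 * n + 1) /\<^sub>R fact (2 * n + 1) / sqrt \<nu>)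
      sums (sinh (sqrt \<nu>) / sqrt \<nu>)"
    by (rule sums_divide)
  moreover have "sqrt \<nu> ^ (2 * n + 1) /\<^sub>R fact (2 * n + 1) / sqrt \<nu> = \<nu> ^ n / fact (2 * n + 1)"
    for n
    using real_sqrt_power_even[OF assms, of n] False by (simp add: field_simps del: fact_Suc)
  ultimately show ?thesis
    using False by (simp add: sinhc_def)
qed

lemma funpow_even_eigen:
  assumes "linear f" and "f (f v) = \<nu> *\<^sub>R v"
  shows "(f ^^ (2 * n)) v = \<nu> ^ n *\<^sub>R v"
proof (induction n)
  case 0
  then show ?case by simp
next
  case (Suc n)
  have "(f ^^ (2 * Suc n)) v = f (f ((f ^^ (2 * n)) v))" by simp
  also have "\<dots> = \<nu> ^ n *\<^sub>R f (f v)" using Suc assms(1) by (simp add: linear_cmul)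
  also have "\<dots> = \<nu> ^ Suc n *\<^sub>R v" using assms(2) by (simp add: mult.commute)
  finally show ?case .
qed

lemma
  fixes br :: "'g::real_normed_vector \<Rightarrow> 'g \<Rightarrow> 'g"
  assumes "linear (br Y)" and "br Y (br Y v) = \<nu> *\<^sub>R v" and "\<nu> \<ge> 0"
  shows E_op_eigen: "E_op br Y v = sinhc \<nu> *\<^sub>R v"
    and S_op_eigen: "S_op br Y v = cosh (sqrt \<nu>) *\<^sub>R v"
proof -
  have pow: "(br Y ^^ (2 * n)) v = \<nu> ^ n *\<^sub>R v" for n
    using funpow_even_eigen[OF assms(1,2)] .
  have "(\<lambda>n. (\<nu> ^ n / fact (2 * n + 1)) *\<^sub>R v) sums (sinhc \<nu> *\<^sub>R v)"
    by (rule sums_scaleR_left[OF sums_sinhc[OF assms(3)]])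
  then show "E_op br Y v = sinhc \<nu> *\<^sub>R v"
    unfolding E_op_def pow by (simp add: sums_iff divide_inverse mult.commute)
  have "(\<lambda>n. (\<nu> ^ n / fact (2 * n)) *\<^sub>R v) sums (cosh (sqrt \<nu>) *\<^sub>R v)"
    by (rule sums_scaleR_left[OF sums_cosh_sqrt[OF assms(3)]])
  then show "S_op br Y v = cosh (sqrt \<nu>) *\<^sub>R v"
    unfolding S_op_def pow by (simp add: sums_iff divide_inverse mult.commute)
qed

lemma is_eigvec_E_op_S_op:
  fixes br :: "'g::real_normed_vector \<Rightarrow> 'g \<Rightarrow> 'g"
  assumes "linear (br Y)" and "br Y (br Y v) = \<nu> *\<^sub>R v" and "\<nu> \<ge> 0" and "v \<noteq> 0"
  shows "is_eigvec (E_op br Y) v (sinhc \<nu>) \<and> is_eigvec (S_op br Y) v (cosh (sqrt \<nu>))"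
  using assms E_op_eigen[of br Y v \<nu>] S_op_eigen[of br Y v \<nu>] by (simp add: is_eigvec_def)

lemma
  fixes br :: "'g::real_vector \<Rightarrow> 'g \<Rightarrow> 'g"
  assumes "lie_bracket br"
  shows lie_bracket_linear_right: "linear (br x)"
    and lie_bracket_add_left: "br (x + y) z = br x z + br y z"
    and lie_bracket_add_right: "br x (y + z) = br x y + br x z"
    and lie_bracket_neg_left: "br (- x) y = - br x y"
    and lie_bracket_neg_right: "br x (- y) = - br x y"
    and lie_bracket_scaleR_right: "br x (c *\<^sub>R y) = c *\<^sub>R br x y"
    and lie_bracket_zero_right: "br x 0 = 0"
proof -
  have lin: "linear (br x)" "linear (\<lambda>x. br x y)" for x y
    using assms by (simp_all add: lie_bracket_def bilinear_def)
  show "linear (br x)" by (rule lin(1))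
  show "br (x + y) z = br x z + br y z" by (rule linear_add[OF lin(2)])
  show "br x (y + z) = br x y + br x z" by (rule linear_add[OF lin(1)])
  show "br (- x) y = - br x y" by (rule linear_neg[OF lin(2)])
  show "br x (- y) = - br x y" by (rule linear_neg[OF lin(1)])
  show "br x (c *\<^sub>R y) = c *\<^sub>R br x y" by (rule linear_cmul[OF lin(1)])
  show "br x 0 = 0" by (rule linear_0[OF lin(1)])
qed

lemma lie_bracket_anticomm:
  assumes "lie_bracket br"
  shows "br y x = - br x y"
proof -
  have alt: "br z z = 0" for z
    using assms by (simp add: lie_bracket_def)
  have "0 = br (x + y) (x + y)"
    by (rule alt[symmetric])
  also have "\<dots> = br x y + br y x"
    unfolding lie_bracket_add_left[OF assms] by (simp add: lie_bracket_add_right[OF assms] alt)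
  finally show ?thesis
    by (metis add_eq_0_iff)
qed

lemma lie_bracket_derivation:
  assumes "lie_bracket br"
  shows "br u (br x y) = br (br u x) y + br x (br u y)"
proof -
  have "br u (br x y) + br x (br y u) + br y (br u x) = 0"
    using assms by (simp add: lie_bracket_def)
  moreover have "br x (br y u) = - br x (br u y)"
    by (metis lie_bracket_anticomm[OF assms] lie_bracket_neg_right[OF assms])
  moreover have "br y (br u x) = - br (br u x) y"
    by (rule lie_bracket_anticomm[OF assms])
  ultimately show ?thesis
    by (simp add: algebra_simps eq_neg_iff_add_eq_0)
qed

context
  fixes br :: "'g::real_vector \<Rightarrow> 'g \<Rightarrow> 'g" and K M :: "'g set" and Ups :: 'g
  assumes hs: "herm_sym_data br K M Ups"
begin

lemma herm_sym_lie_bracket: "lie_bracket br"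
  using hs unfolding herm_sym_data_def by blast

lemma herm_sym_Jop_in_M: "x \<in> M \<Longrightarrow> Jop br Ups x \<in> M"
  using hs unfolding herm_sym_data_def Jop_def by blast

lemma herm_sym_Jop_Jop: "x \<in> M \<Longrightarrow> Jop br Ups (Jop br Ups x) = - x"
  using hs unfolding herm_sym_data_def Jop_def by blast

lemma herm_sym_Jop_bracket_M: "x \<in> M \<Longrightarrow> y \<in> M \<Longrightarrow> Jop br Ups (br x y) = 0"
  using hs unfolding herm_sym_data_def Jop_def by blast

lemma herm_sym_Jop_nonzero:
  assumes "x \<in> M" and "x \<noteq> 0"
  shows "Jop br Ups x \<noteq> 0"
proof
  assume "Jop br Ups x = 0"
  then have "Jop br Ups (Jop br Ups x) = 0"
    unfolding Jop_def by (simp add: lie_bracket_zero_right[OF herm_sym_lie_bracket])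
  with herm_sym_Jop_Jop[OF assms(1)] assms(2) show False
    by simp
qed

lemma herm_sym_Jop_derivation:
  "Jop br Ups (br x y) = br (Jop br Ups x) y + br x (Jop br Ups y)"
  unfolding Jop_def by (rule lie_bracket_derivation[OF herm_sym_lie_bracket])

lemma herm_sym_bracket_Jop_Jop:
  assumes "x \<in> M" and "y \<in> M"
  shows "br (Jop br Ups x) (Jop br Ups y) = br x y"
proof -
  have "0 = Jop br Ups (br (Jop br Ups x) y)"
    using herm_sym_Jop_bracket_M herm_sym_Jop_in_M assms by simp
  also have "\<dots> = br (Jop br Ups (Jop br Ups x)) y + br (Jop br Ups x) (Jop br Ups y)"
    by (rule herm_sym_Jop_derivation)
  also have "\<dots> = - br x y + br (Jop br Ups x) (Jop br Ups y)"
    by (simp add: herm_sym_Jop_Jop[OF assms(1)] lie_bracket_neg_left[OF herm_sym_lie_bracket])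
  finally show ?thesis
    by (metis add_eq_0_iff minus_minus)
qed

lemma herm_sym_Jop_ad_square:
  assumes "x \<in> M" and "a \<in> M"
  shows "Jop br Ups (br x (br x a)) = br (Jop br Ups x) (br (Jop br Ups x) (Jop br Ups a))"
proof -
  have "Jop br Ups (br x (br x a)) = br (Jop br Ups x) (br x a) + br x (Jop br Ups (br x a))"
    by (rule herm_sym_Jop_derivation)
  also have "\<dots> = br (Jop br Ups x) (br x a)"
    by (simp add: herm_sym_Jop_bracket_M[OF assms] lie_bracket_zero_right[OF herm_sym_lie_bracket])
  also have "\<dots> = br (Jop br Ups x) (br (Jop br Ups x) (Jop br Ups a))"
    by (simp add: herm_sym_bracket_Jop_Jop[OF assms])
  finally show ?thesis .
qed

end

theorem theorem5p2:
  fixes br :: "'g::euclidean_space \<Rightarrow> 'g \<Rightarrow> 'g"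
    and K M :: "'g set" and Ups Z A :: 'g and \<nu>1 \<nu>2 :: real
  assumes hs: "herm_sym_data br K M Ups"
    and Z: "Z \<in> M" and A: "A \<in> M" and A0: "A \<noteq> 0"
    and nu1: "\<nu>1 \<ge> 0" and nu2: "\<nu>2 \<ge> 0"
    and h1: "br Z (br Z A) = \<nu>1 *\<^sub>R A"
    and h2: "br (Jop br Ups Z) (br (Jop br Ups Z) A) = \<nu>2 *\<^sub>R A"
  shows "is_eigvec (E_op br Z) A (sinhc \<nu>1) \<and>
         is_eigvec (E_op br (Jop br Ups Z)) A (sinhc \<nu>2) \<and>
         is_eigvec (S_op br Z) A (cosh (sqrt \<nu>1)) \<and>
         is_eigvec (S_op br (Jop br Ups Z)) A (cosh (sqrt \<nu>2)) \<and>
         is_eigvec (E_op br Z) (Jop br Ups A) (sinhc \<nu>2) \<and>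
         is_eigvec (E_op br (Jop br Ups Z)) (Jop br Ups A) (sinhc \<nu>1) \<and>
         is_eigvec (S_op br Z) (Jop br Ups A) (cosh (sqrt \<nu>2)) \<and>
         is_eigvec (S_op br (Jop br Ups Z)) (Jop br Ups A) (cosh (sqrt \<nu>1))"
proof -
  let ?J = "Jop br Ups"
  have lb: "lie_bracket br"
    by (rule herm_sym_lie_bracket[OF hs])
  have JZ: "?J Z \<in> M" and JA0: "?J A \<noteq> 0"
    using herm_sym_Jop_in_M[OF hs Z] herm_sym_Jop_nonzero[OF hs A A0] .
  have JA_JZ: "br (?J Z) (br (?J Z) (?J A)) = \<nu>1 *\<^sub>R ?J A"
    using herm_sym_Jop_ad_square[OF hs Z A]
    by (simp add: h1 Jop_def lie_bracket_scaleR_right[OF lb])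
  have "br (- Z) (br (- Z) (?J A)) = ?J (br (?J Z) (br (?J Z) A))"
    using herm_sym_Jop_ad_square[OF hs JZ A] by (simp add: herm_sym_Jop_Jop[OF hs Z])
  also have "\<dots> = \<nu>2 *\<^sub>R ?J A"
    unfolding h2 by (simp add: Jop_def lie_bracket_scaleR_right[OF lb])
  finally have JA_Z: "br Z (br Z (?J A)) = \<nu>2 *\<^sub>R ?J A"
    by (simp add: lie_bracket_neg_left[OF lb] lie_bracket_neg_right[OF lb])
  note eigvec = is_eigvec_E_op_S_op[where br = br, OF lie_bracket_linear_right[OF lb]]
  show ?thesis
    using eigvec[OF h1 nu1 A0] eigvec[OF h2 nu2 A0] eigvec[OF JA_Z nu2 JA0] eigvec[OF JA_JZ nu1 JA0]
    by blast
qed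

end
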